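(* Let the total budget satisfy $\mathrm{TB}>0$. There is no game form $G$ such that $*+G=0$, where $*=\{0\mid 0\}$.
   Context: Game forms are defined recursively: $G=\{G^{\mathcal L}\mid G^{\mathcal R}\}$ with finite sets of Left and Right options, and finite birthday. $0=\{\varnothing\mid\varnothing\}$, $*=\{0\mid 0\}$. The budget set for total budget $\mathrm{TB}$ is $\mathcal B=\{0,\dots,\mathrm{TB},\hat 0,\dots,\widehat{\mathrm{TB}}\}$: state $p$ (resp. $\hat p$) means Left holds $p$ dollars and Right holds $\mathrm{TB}-p$, and Right (resp. Left) holds the tie-breaking marker. Play of $(G,\tilde p)$: at every position (terminal ones included) both players bid simultaneously, Left $\ell\in\{0,\dots,p\}$, Right $r\in\{0,\dots,\mathrm{TB}-p\}$. If Left holds the marker (state $\hat p$): if $\ell>r$ Left moves to $(G^L,\widehat{p-\ell})$, or, including the marker (allowed when $\ell\ge r$), to $(G^L,p-\ell)$; if $\ell=r$ Left wins, the marker passes to Right, play continues at $(G^L,p-\ell)$; if $\ell<r$ Right moves to $(G^R,\widehat{p+r})$. Symmetrically when Right holds the marker (state $p$): if $r>\ell$ Right moves to $(G^R,p+r)$ or, including the marker, to $(G^R,\widehat{p+r})$; if $r=\ell$ Right wins, the marker passes to Left, play continues at $(G^R,\widehat{p+r})$; if $r<\ell$ Left moves to $(G^L,p-\ell)$. A player who wins a bid but has no option loses. $o(G,\tilde p)\in\{\mathrm L,\mathrm R\}$ is the winner under optimal play; $\mathrm L>\mathrm R$. Disjunctive sum $G+H=\{G^{\mathcal L}+H,G+H^{\mathcal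 L}\mid G^{\mathcal R}+H,G+H^{\mathcal R}\}$. $G\ge H$ means $o(G+X,\tilde p)\ge o(H+X,\tilde p)$ for all game forms $X$ and all $\tilde p\in\mathcal B$; $G=H$ means $G\ge H$ and $H\ge G$. *)

theory Defs
  imports Main "HOL-Library.FSet"
begin

text \<open>Game forms: finite sets of Left and Right options; finite birthday is
automatic for an inductive datatype.\<close>
datatype game = Game (lopts: "game fset") (ropts: "game fset")

definition gzero :: game where "gzero = Game {||} {||}"
definition gstar :: game where "gstar = Game {|gzero|} {|gzero|}"

lemma game_size_lopt: "x |\<in>| L \<Longrightarrow> size x < size (Game L R)"
proof -
  assume "x |\<in>| L"
  then have "Suc (size x) \<le> (\<Sum>y \<in> fset L. Suc (size y))"
    by (intro member_le_sum) auto
  then show ?thesis by simp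
qed

lemma game_size_ropt: "x |\<in>| R \<Longrightarrow> size x < size (Game L R)"
proof -
  assume "x |\<in>| R"
  then have "Suc (size x) \<le> (\<Sum>y \<in> fset R. Suc (size y))"
    by (intro member_le_sum) auto
  then show ?thesis by simp
qed

function gsum :: "game \<Rightarrow> game \<Rightarrow> game" where
 "gsum (Game GL GR) (Game HL HR) =
   Game ((\<lambda>g. gsum g (Game HL HR)) |`| GL |\<union>| (\<lambda>h. gsum (Game GL GR) h) |`| HL)
        ((\<lambda>g. gsum g (Game HL HR)) |`| GR |\<union>| (\<lambda>h. gsum (Game GL GR) h) |`| HR)"
  by pat_completeness auto
termination
  by (relation "measure (\<lambda>(g,h). size g + size h)") (auto dest: game_size_lopt game_size_ropt)

text \<open>A budget state is a pair (p, lm) with p \<le> TB Left's money; lm = True means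
Left holds the tie-breaking marker (state \<open>p-hat\<close>), lm = False means Right holds it
(state p).  left_wins TB G p lm is True iff the outcome o(G, state) is L
(Left wins under optimal play): Left has a bid l \<le> p such that for every Right bid
r \<le> TB - p the resulting resolution is a win for Left.  A player who wins a
bid but has no option loses (empty fBex / fBall).\<close>
function left_wins :: "nat \<Rightarrow> game \<Rightarrow> nat \<Rightarrow> bool \<Rightarrow> bool" where
 "left_wins TB (Game L R) p lm =
   (\<exists>l\<le>p. \<forall>r\<le>TB - p.
     (if lm then
        (if r < l then fBex L (\<lambda>g. left_wins TB g (p - l) True \<or> left_wins TB g (p - l) False)
         else if l = r then fBex L (\<lambda>g. left_wins TB g (p - l) False)
         else fBall R (\<lambda>g. left_wins TB g (p + r) True))
      else
        (if l < r then fBall R (\<lambda>g. left_wins TB g (p + r) False \<and> left_wins TB g (p + r) True)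
         else if l = r then fBall R (\<lambda>g. left_wins TB g (p + r) True)
         else fBex L (\<lambda>g. left_wins TB g (p - l) False))))"
  by pat_completeness auto
termination
  by (relation "measure (\<lambda>(TB,g,p,lm). size g)") (auto dest: game_size_lopt game_size_ropt)

text \<open>Outcome o(G, state) as a boolean: True = L, False = R, so that L > R
coincides with the order on bool.\<close>
definition outcome :: "nat \<Rightarrow> game \<Rightarrow> nat \<Rightarrow> bool \<Rightarrow> bool" where
  "outcome TB G p lm = left_wins TB G p lm"

definition game_ge :: "nat \<Rightarrow> game \<Rightarrow> game \<Rightarrow> bool" where
  "game_ge TB G H \<longleftrightarrow> (\<forall>X p lm. p \<le> TB \<longrightarrow> outcome TB (gsum H X) p lm \<le> outcome TB (gsum G X) p lm)"

definition game_eq :: "nat \<Rightarrow> game \<Rightarrow> game \<Rightarrow> bool" where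
  "game_eq TB G H \<longleftrightarrow> game_ge TB G H \<and> game_ge TB H G"

end

theory Submission
  imports Defs
begin

text \<open>Suppose \<open>* + G = 0\<close>; comparing with \<open>X = 0\<close> the two games have the same outcome in
every budget state.  In \<open>0\<close> the player without the marker wins.  So Left wins \<open>* + G\<close> from
state \<open>0\<close>: there Right outbids her with his whole budget \<open>TB > 0\<close>, and every Right move,
in particular the move from \<open>*\<close> to \<open>0\<close> leading to \<open>G\<close>, must lose, so Left wins \<open>G\<close>
holding all the money but not the marker.  Consequently, from state \<open>TB\<close> with the marker,
Left wins \<open>* + G\<close> by winning the forced tie at bid \<open>0\<close> and moving in \<open>*\<close> to \<open>G\<close> with
all the money, handing the marker over.  But Left loses \<open>0\<close> in that state.\<close>

lemma gsum_gzero_right [simp]: "gsum g gzero = g"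
proof (induction g)
  case (Game L R)
  have "(\<lambda>x. gsum x gzero) |`| L = L"
    using Game.IH(1) by (intro fset_eqI) (force simp: fimage_iff)
  moreover have "(\<lambda>x. gsum x gzero) |`| R = R"
    using Game.IH(2) by (intro fset_eqI) (force simp: fimage_iff)
  ultimately show ?case by (simp add: gzero_def)
qed

lemma gsum_gzero_left [simp]: "gsum gzero g = g"
proof (induction g)
  case (Game L R)
  have "(\<lambda>x. gsum gzero x) |`| L = L"
    using Game.IH(1) by (intro fset_eqI) (force simp: fimage_iff)
  moreover have "(\<lambda>x. gsum gzero x) |`| R = R"
    using Game.IH(2) by (intro fset_eqI) (force simp: fimage_iff)
  ultimately show ?case by (simp add: gzero_def)
qed

lemma gsum_gstar_opts:
  "G |\<in>| lopts (gsum gstar G)" "G |\<in>| ropts (gsum gstar G)"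
  using gsum_gzero_left[of G] by (cases G; auto simp: gstar_def)+

lemma game_eq_left_wins_eq:
  assumes "game_eq TB G H" and "p \<le> TB"
  shows "left_wins TB G p lm = left_wins TB H p lm"
  using assms unfolding game_eq_def game_ge_def outcome_def
  by (metis gsum_gzero_right order_antisym)

lemma left_wins_gzero_iff: "left_wins TB gzero p lm \<longleftrightarrow> \<not> lm"
  by (auto simp: gzero_def)

lemma left_wins_broke_imp_ropts:
  assumes "TB > 0" and "left_wins TB (Game L R) 0 False" and "g |\<in>| R"
  shows "left_wins TB g TB False"
proof -
  from assms(2) have "\<forall>r\<le>TB. 0 < r \<longrightarrow>
      fBall R (\<lambda>g. left_wins TB g r False \<and> left_wins TB g r True)"
    by (auto split: if_splits)
  then show ?thesis
    using assms(1,3) by auto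
qed

lemma left_wins_rich_with_marker_if_lopt:
  assumes "g |\<in>| L" and "left_wins TB g TB False"
  shows "left_wins TB (Game L R) TB True"
  using assms by (auto intro!: exI[of _ 0])

theorem mainTheorem6:
  fixes TB :: nat
  assumes "TB > 0"
  shows "\<not> (\<exists>G. game_eq TB (gsum gstar G) gzero)"
proof
  assume "\<exists>G. game_eq TB (gsum gstar G) gzero"
  then obtain G where eq: "game_eq TB (gsum gstar G) gzero" ..
  define S where "S = gsum gstar G"
  have S_split: "S = Game (lopts S) (ropts S)"
    by (cases S) simp
  have "left_wins TB S 0 False"
    using game_eq_left_wins_eq[OF eq, of 0 False] by (simp add: S_def left_wins_gzero_iff)
  then have "left_wins TB G TB False"
    using left_wins_broke_imp_ropts[OF assms] gsum_gstar_opts(2) S_split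
    by (metis S_def)
  then have "left_wins TB S TB True"
    using left_wins_rich_with_marker_if_lopt gsum_gstar_opts(1) S_split
    by (metis S_def)
  moreover have "\<not> left_wins TB S TB True"
    using game_eq_left_wins_eq[OF eq, of TB True] by (simp add: S_def left_wins_gzero_iff)
  ultimately show False by contradiction
qed

end
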